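(* Let $p,m,n\ge1$, let $a_1,\dots,a_n\in\mathbb{C}$ be distinct, let $m_1,\dots,m_n\ge1$ be integers, let $C_0,\dots,C_{m-1}$, $B_k^{(j)}$ be complex $p\times p$ matrices, let $\|\cdot\|$ be any induced matrix norm, and let $$R(\lambda)=I\lambda^m-C_{m-1}\lambda^{m-1}-\cdots-C_1\lambda-C_0+\sum_{j=1}^{n}\sum_{k=1}^{m_j}\frac{B_k^{(j)}}{(\lambda-a_j)^k}.$$ If $\lambda_0$ is an eigenvalue of $R(\lambda)$, then: (1) $|\lambda_0|\le\max_{1\le j\le n}\Big\{1+|a_j|,\ \sum_{j=1}^n\sum_{k=1}^{m_j}\|B_k^{(j)}\|+\sum_{i=0}^{m-1}\|C_i\|\Big\}$; (2) if every $m_j=1$ (writing $B^{(j)}=B^{(j)}_1$), then $|\lambda_0|\le\max_{1\le j\le n,\,1\le i\le m-1}\{|a_j|+\|B^{(j)}\|,\ 1+\|C_i\|,\ \|C_0\|+n\}$; otherwise $|\lambda_0|\le\max_{1\le j\le n,\,1\le k\le m_j,\,1\le i\le m-1}\Big\{|a_j|+\|B_k^{(j)}\|,\ 1+|a_j|,\ 1+\|C_i\|,\ \|C_0\|+\sum_{j=1}^n m_j\Big\}$; (3) $|\lambda_0|\le\frac{\alpha+\beta+\sqrt{(\alpha-\beta)^2+(\gamma+\delta)^2}}{2}$, where $\alpha=\max_{1\le j\le n}\{|a_j|+\cos(\frac{\pi}{m_j+1})\}$, $\beta=w(\mathcal{B}_0)$, $\gamma=\sqrt{\sum_{j=1}^n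 m_j}$, $\delta=\sqrt{\sum_{j=1}^n\sum_{k=1}^{m_j}\|B_k^{(j)}\|^2}$, and $\mathcal{B}_0$ is the $m\times m$ real matrix with $1$'s on the superdiagonal, last row $(\|C_0\|,\|C_1\|,\dots,\|C_{m-1}\|)$, and zeros elsewhere.
   Context: A scalar $\lambda_0\in\mathbb{C}\setminus\{a_1,\dots,a_n\}$ is an eigenvalue of $R(\lambda)$ if there is a nonzero $v\in\mathbb{C}^p$ with $R(\lambda_0)v=0$. For a square complex matrix $A$, $w(A)=\sup\{|x^*Ax|:x^*x=1\}$ is its numerical radius. *)

theory Defs
  imports "HOL-Analysis.Analysis"
begin

definition smat :: "complex \<Rightarrow> complex^'p^'p \<Rightarrow> complex^'p^'p" where
  "smat c A = (\<chi> r s. c * A $ r $ s)"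

definition is_vec_norm :: "(complex^'p \<Rightarrow> real) \<Rightarrow> bool" where
  "is_vec_norm N \<longleftrightarrow>
     (\<forall>x. 0 \<le> N x) \<and> (\<forall>x. N x = 0 \<longleftrightarrow> x = 0) \<and>
     (\<forall>c x. N (c *s x) = cmod c * N x) \<and> (\<forall>x y. N (x + y) \<le> N x + N y)"

definition induced_norm :: "(complex^'p \<Rightarrow> real) \<Rightarrow> complex^'p^'p \<Rightarrow> real" where
  "induced_norm N A = (SUP x \<in> {x. x \<noteq> 0}. N (A *v x) / N x)"

definition Rmat :: "nat \<Rightarrow> (nat \<Rightarrow> complex^'p^'p) \<Rightarrow> nat \<Rightarrow> (nat \<Rightarrow> complex)
    \<Rightarrow> (nat \<Rightarrow> nat) \<Rightarrow> (nat \<Rightarrow> nat \<Rightarrow> complex^'p^'p) \<Rightarrow> complex \<Rightarrow> complex^'p^'p" where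
  "Rmat m C n a mj B l =
     smat (l ^ m) (mat 1) - (\<Sum>i<m. smat (l ^ i) (C i))
     + (\<Sum>j\<in>{1..n}. \<Sum>k\<in>{1..mj j}. smat (1 / (l - a j) ^ k) (B j k))"

definition is_eigenvalue_R :: "nat \<Rightarrow> (nat \<Rightarrow> complex^'p^'p) \<Rightarrow> nat \<Rightarrow> (nat \<Rightarrow> complex)
    \<Rightarrow> (nat \<Rightarrow> nat) \<Rightarrow> (nat \<Rightarrow> nat \<Rightarrow> complex^'p^'p) \<Rightarrow> complex \<Rightarrow> bool" where
  "is_eigenvalue_R m C n a mj B l \<longleftrightarrow>
     l \<notin> a ` {1..n} \<and> (\<exists>v::complex^'p. v \<noteq> 0 \<and> Rmat m C n a mj B l *v v = 0)"

definition num_radius :: "nat \<Rightarrow> (nat \<Rightarrow> nat \<Rightarrow> complex) \<Rightarrow> real" where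
  "num_radius m A = (SUP x \<in> {x :: nat \<Rightarrow> complex. (\<Sum>i<m. (cmod (x i))\<^sup>2) = 1}.
       cmod (\<Sum>r<m. \<Sum>s<m. cnj (x r) * A r s * x s))"

definition B0mat :: "nat \<Rightarrow> (nat \<Rightarrow> real) \<Rightarrow> nat \<Rightarrow> nat \<Rightarrow> real" where
  "B0mat m c r s = (if s = r + 1 then 1 else if r = m - 1 then c s else 0)"

end

theory Submission
  imports Defs
begin

(*
  If R(l) v = 0 with v nonzero, taking norms in
  l^m v = sum_i l^i C_i v - sum_{j,k} B_k^(j) v / (l - a_j)^k
  gives the scalar inequality
  rho^m <= sum_i ||C_i|| rho^i + sum_{j,k} ||B_k^(j)|| / d_j^k,
  where rho = |l| and d_j = |l - a_j| >= rho - |a_j|; all three bounds are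
  properties of real numbers satisfying it.  Bounds (1) and (2) follow by
  comparing with a geometric sum when rho exceeds the claimed bound.  For (3)
  the inequality is paired with the vectors u = (1, rho, ..., rho^(m-1)) and
  t = (d_j^(-k))_{j,k}: the u-part is controlled by the numerical radius of
  the companion matrix B_0, each block of t by cos(pi/(m_j+1)), the largest
  eigenvalue of a path graph (with the sine vector as eigenvector), and the
  coupling terms by Cauchy-Schwarz.  The result is a quadratic inequality in
  (|u|, |t|) that bounds rho by the largest eigenvalue of the 2x2 matrix
  [[beta, (gamma+delta)/2], [(gamma+delta)/2, alpha]].
*)

section \<open>Vector norms and induced matrix norms\<close>

lemma vec_norm_nonneg: "is_vec_norm N \<Longrightarrow> 0 \<le> N x"
  unfolding is_vec_norm_def by blast

lemma vec_norm_eq_0_iff: "is_vec_norm N \<Longrightarrow> N x = 0 \<longleftrightarrow> x = 0"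
  unfolding is_vec_norm_def by blast

lemma vec_norm_zero: "is_vec_norm N \<Longrightarrow> N 0 = 0"
  by (simp add: vec_norm_eq_0_iff)

lemma vec_norm_pos: "is_vec_norm N \<Longrightarrow> x \<noteq> 0 \<Longrightarrow> 0 < N x"
  by (metis less_eq_real_def vec_norm_eq_0_iff vec_norm_nonneg)

lemma vec_norm_scale: "is_vec_norm N \<Longrightarrow> N (c *s x) = cmod c * N x"
  unfolding is_vec_norm_def by blast

lemma vec_norm_triangle: "is_vec_norm N \<Longrightarrow> N (x + y) \<le> N x + N y"
  unfolding is_vec_norm_def by blast

lemma vec_norm_minus_commute:
  assumes "is_vec_norm N" shows "N (x - y) = N (y - x)"
proof -
  have "x - y = (-1) *s (y - x)" by (simp add: vec_eq_iff)
  then show ?thesis using vec_norm_scale[OF assms, of "-1" "y - x"] by simp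
qed

lemma vec_norm_diff_le:
  assumes "is_vec_norm N" shows "N (x - y) \<le> N x + N y"
proof -
  have "x - y = x + (-1) *s y" by (simp add: vec_eq_iff)
  then show ?thesis
    using vec_norm_triangle[OF assms, of x "(-1) *s y"] vec_norm_scale[OF assms, of "-1" y] by simp
qed

lemma vec_norm_sum_le: "is_vec_norm N \<Longrightarrow> N (\<Sum>i\<in>S. f i) \<le> (\<Sum>i\<in>S. N (f i))"
proof (induction S rule: infinite_finite_induct)
  case (insert x F)
  then show ?case using vec_norm_triangle[of N "f x" "sum f F"] by simp
qed (simp_all add: vec_norm_zero)

lemma vec_norm_scaleR:
  assumes "is_vec_norm N" shows "N (r *\<^sub>R x) = \<bar>r\<bar> * N x"
proof -
  have "r *\<^sub>R x = complex_of_real r *s x"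
    by (simp add: vec_eq_iff scaleR_conv_of_real[where 'a = complex])
  then show ?thesis by (simp add: vec_norm_scale[OF assms])
qed

lemma vec_norm_matrix_vector_le:
  assumes "is_vec_norm N" shows "N (A *v x) \<le> (\<Sum>i\<in>UNIV. N (A *v axis i 1)) * norm x"
proof -
  have "A *v x = (\<Sum>i\<in>UNIV. x $ i *s (A *v axis i 1))"
    by (subst (1) basis_expansion[symmetric]) (simp add: vec.sum vector_scalar_commute)
  then have "N (A *v x) \<le> (\<Sum>i\<in>UNIV. N (x $ i *s (A *v axis i 1)))"
    by (simp add: vec_norm_sum_le[OF assms])
  also have "\<dots> = (\<Sum>i\<in>UNIV. cmod (x $ i) * N (A *v axis i 1))" by (simp add: vec_norm_scale[OF assms])
  also have "\<dots> \<le> (\<Sum>i\<in>UNIV. norm x * N (A *v axis i 1))"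
    by (intro sum_mono mult_right_mono vec_norm_nonneg[OF assms] Finite_Cartesian_Product.norm_nth_le)
  also have "\<dots> = norm x * (\<Sum>i\<in>UNIV. N (A *v axis i 1))" by (rule sum_distrib_left[symmetric])
  finally show ?thesis by (metis mult.commute)
qed

lemma vec_norm_ge_mult_norm:
  assumes N: "is_vec_norm N" obtains c where "0 < c" "\<And>x. c * norm x \<le> N x"
proof -
  define K where "K = (\<Sum>i\<in>UNIV. N (mat 1 *v axis i (1::complex)))"
  have lip: "K-lipschitz_on (sphere 0 1) N"
  proof (rule lipschitz_onI)
    fix x y :: "complex^'a"
    have "N x \<le> N (x - y) + N y" "N y \<le> N (x - y) + N x"
      using vec_norm_triangle[OF N, of "x - y" y] vec_norm_triangle[OF N, of "y - x" x]
        vec_norm_minus_commute[OF N, of x y] by simp_all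
    moreover have "N (x - y) \<le> K * dist x y"
      using vec_norm_matrix_vector_le[OF N, of "mat 1" "x - y"] by (simp add: K_def dist_norm)
    ultimately show "dist (N x) (N y) \<le> K * dist x y" by (simp add: dist_real_def abs_le_iff)
  qed (simp add: K_def sum_nonneg vec_norm_nonneg[OF N])
  have "sphere (0::complex^'a) 1 \<noteq> {}" by simp
  then obtain x0 where x0: "x0 \<in> sphere 0 1" and min: "\<And>y. y \<in> sphere 0 1 \<Longrightarrow> N x0 \<le> N y"
    using continuous_attains_inf[OF compact_sphere _ lipschitz_on_continuous_on[OF lip]] by blast
  have "N x0 * norm x \<le> N x" for x
  proof (cases "x = 0")
    case False
    have "N x0 \<le> N ((1 / norm x) *\<^sub>R x)" using False by (intro min) simp
    then show ?thesis using False by (simp add: vec_norm_scaleR[OF N] field_simps)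
  qed (simp add: vec_norm_zero[OF N])
  moreover have "0 < N x0" using x0 by (intro vec_norm_pos[OF N]) auto
  ultimately show ?thesis using that by blast
qed

(* Without this bound the supremum defining induced_norm would be a junk value. *)
lemma bdd_above_induced_norm_ratios:
  assumes N: "is_vec_norm N" shows "bdd_above ((\<lambda>x. N (A *v x) / N x) ` {x. x \<noteq> 0})"
proof -
  obtain c where c: "0 < c" "\<And>x. c * norm x \<le> N x" using vec_norm_ge_mult_norm[OF N] by blast
  define M where "M = (\<Sum>i\<in>UNIV. N (A *v axis i 1))"
  have M: "0 \<le> M" by (simp add: M_def sum_nonneg vec_norm_nonneg[OF N])
  have bound: "N (A *v x) / N x \<le> M / c" if "x \<noteq> 0" for x
  proof -
    have "norm x \<le> N x / c" by (metis c mult.commute pos_le_divide_eq)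
    then have "N (A *v x) \<le> M * (N x / c)"
      using vec_norm_matrix_vector_le[OF N, of A x] M unfolding M_def by (meson mult_left_mono order_trans)
    then have "N (A *v x) / N x \<le> M * (N x / c) / N x"
      using vec_norm_pos[OF N that] by (intro divide_right_mono) simp_all
    also have "\<dots> = M / c" using vec_norm_pos[OF N that] by (simp add: field_simps)
    finally show ?thesis .
  qed
  show ?thesis by (rule bdd_aboveI2, rule bound) simp
qed

lemma induced_norm_ratio_le:
  assumes "is_vec_norm N" and "x \<noteq> 0" shows "N (A *v x) / N x \<le> induced_norm N A"
  unfolding induced_norm_def
  using assms(2) bdd_above_induced_norm_ratios[OF assms(1)] by (intro cSUP_upper) simp_all

lemma vec_norm_mult_le_induced_norm:
  assumes N: "is_vec_norm N" shows "N (A *v x) \<le> induced_norm N A * N x"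
proof (cases "x = 0")
  case False
  then show ?thesis
    using induced_norm_ratio_le[OF N False] vec_norm_pos[OF N False] by (simp add: field_simps)
qed (simp add: vec_norm_zero[OF N])

lemma induced_norm_nonneg:
  assumes N: "is_vec_norm N" shows "0 \<le> induced_norm N A"
proof -
  have "axis undefined 1 \<noteq> (0 :: complex^'a)" by simp
  from induced_norm_ratio_le[OF N this, of A] show ?thesis
    by (meson divide_nonneg_nonneg order_trans vec_norm_nonneg[OF N])
qed

lemma smat_mult_vector: "smat c M *v v = c *s (M *v v)"
  by (simp add: smat_def vec_eq_iff matrix_vector_mult_def sum_distrib_left mult.assoc)

lemma sum_matrix_vector_mult: "(\<Sum>i\<in>S. f i) *v v = (\<Sum>i\<in>S. f i *v v)"
  by (induction S rule: infinite_finite_induct) (simp_all add: matrix_vector_mult_add_rdistrib)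

lemma Rmat_mult_vector:
  "Rmat m C n a mj B l *v v = l ^ m *s v - (\<Sum>i<m. l ^ i *s (C i *v v))
     + (\<Sum>j\<in>{1..n}. \<Sum>k\<in>{1..mj j}. (1 / (l - a j) ^ k) *s (B j k *v v))"
  unfolding Rmat_def
  by (simp add: matrix_vector_mult_add_rdistrib matrix_vector_mult_diff_rdistrib
      sum_matrix_vector_mult smat_mult_vector)

lemma eigenvalue_R_modulus_ineq:
  assumes N: "is_vec_norm N" and ev: "is_eigenvalue_R m C n a mj B l"
  shows "cmod l ^ m \<le> (\<Sum>i<m. induced_norm N (C i) * cmod l ^ i)
     + (\<Sum>j\<in>{1..n}. \<Sum>k\<in>{1..mj j}. induced_norm N (B j k) / cmod (l - a j) ^ k)"
proof -
  obtain v where v: "v \<noteq> 0" "Rmat m C n a mj B l *v v = 0"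
    using ev unfolding is_eigenvalue_R_def by blast
  define P where "P = (\<Sum>i<m. l ^ i *s (C i *v v))"
  define Q where "Q = (\<Sum>j\<in>{1..n}. \<Sum>k\<in>{1..mj j}. (1 / (l - a j) ^ k) *s (B j k *v v))"
  have scaled_bound: "N (z *s (M *v v)) \<le> induced_norm N M * cmod z * N v" for z M
  proof -
    have "cmod z * N (M *v v) \<le> cmod z * (induced_norm N M * N v)"
      by (intro mult_left_mono vec_norm_mult_le_induced_norm[OF N]) simp
    then show ?thesis by (simp add: vec_norm_scale[OF N] mult_ac)
  qed
  have "l ^ m *s v = P - Q"
    using v(2) unfolding Rmat_mult_vector P_def[symmetric] Q_def[symmetric] by (simp add: algebra_simps)
  then have "cmod l ^ m * N v \<le> N P + N Q"
    by (metis vec_norm_diff_le[OF N] vec_norm_scale[OF N] norm_power)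
  also have "N P \<le> (\<Sum>i<m. induced_norm N (C i) * cmod l ^ i) * N v"
    unfolding P_def sum_distrib_right
  proof (rule order_trans[OF vec_norm_sum_le[OF N] sum_mono])
    fix i
    show "N (l ^ i *s (C i *v v)) \<le> induced_norm N (C i) * cmod l ^ i * N v"
      using scaled_bound[of "l ^ i" "C i"] by (simp add: norm_power)
  qed
  also have "N Q \<le> (\<Sum>j\<in>{1..n}. \<Sum>k\<in>{1..mj j}. induced_norm N (B j k) / cmod (l - a j) ^ k) * N v"
    unfolding Q_def sum_distrib_right
  proof (rule order_trans[OF vec_norm_sum_le[OF N] sum_mono])
    fix j
    show "N (\<Sum>k\<in>{1..mj j}. (1 / (l - a j) ^ k) *s (B j k *v v))
        \<le> (\<Sum>k\<in>{1..mj j}. induced_norm N (B j k) / cmod (l - a j) ^ k * N v)"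
    proof (rule order_trans[OF vec_norm_sum_le[OF N] sum_mono])
      fix k
      show "N ((1 / (l - a j) ^ k) *s (B j k *v v)) \<le> induced_norm N (B j k) / cmod (l - a j) ^ k * N v"
        using scaled_bound[of "1 / (l - a j) ^ k" "B j k"] by (simp add: norm_divide norm_power)
    qed
  qed
  finally show ?thesis using vec_norm_pos[OF N v(1)] by (simp add: distrib_right[symmetric])
qed

section \<open>Real inequalities\<close>

lemma le_const_coeff_if_power_le:
  fixes \<rho> X :: real and c :: "nat \<Rightarrow> real"
  assumes power_le: "\<rho> ^ m \<le> (\<Sum>i<m. c i * \<rho> ^ i) + X" and "1 \<le> m" and "0 \<le> \<rho>"
    and small_coeffs: "\<And>i. i \<in> {1..<m} \<Longrightarrow> c i \<le> \<rho> - 1"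
  shows "\<rho> \<le> c 0 + X"
proof -
  obtain m' where m: "m = Suc m'" using \<open>1 \<le> m\<close> by (cases m) auto
  have telescope: "(\<Sum>i\<in>{1..<Suc k}. (\<rho> - 1) * \<rho> ^ i) = \<rho> ^ Suc k - \<rho>" for k
    by (induction k) (simp_all add: algebra_simps)
  have "(\<Sum>i<m. c i * \<rho> ^ i) = c 0 + (\<Sum>i\<in>{1..<m}. c i * \<rho> ^ i)"
    unfolding m by (simp add: lessThan_atLeast0 sum.atLeast_Suc_lessThan)
  moreover have "(\<Sum>i\<in>{1..<m}. c i * \<rho> ^ i) \<le> (\<Sum>i\<in>{1..<m}. (\<rho> - 1) * \<rho> ^ i)"
    using small_coeffs \<open>0 \<le> \<rho>\<close> by (intro sum_mono mult_right_mono) auto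
  ultimately show ?thesis using power_le telescope[of m'] unfolding m by linarith
qed

lemma adjacent_products_le_eigenvalue:
  fixes y w :: "nat \<Rightarrow> real" and \<mu> :: real
  assumes w_pos: "\<And>k. k \<in> {1..M} \<Longrightarrow> 0 < w k" and "w 0 = 0" and "w (Suc M) = 0"
    and eigen: "\<And>k. k \<in> {1..M} \<Longrightarrow> w (k - 1) + w (Suc k) = 2 * \<mu> * w k"
  shows "(\<Sum>k\<in>{1..<M}. y k * y (Suc k)) \<le> \<mu> * (\<Sum>k\<in>{1..M}. (y k)\<^sup>2)"
proof -
  \<comment> \<open>AM-GM on each product, weighted by ratios of neighbouring entries of w\<close>
  define up where "up k = w (Suc k) / w k * (y k)\<^sup>2 / 2" for k
  define down where "down k = w (k - 1) / w k * (y k)\<^sup>2 / 2" for k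
  have "y k * y (Suc k) \<le> up k + down (Suc k)" if "k \<in> {1..<M}" for k
  proof -
    have "0 < w k" "0 < w (Suc k)" using that w_pos by auto
    moreover have "0 \<le> (w (Suc k) * y k - w k * y (Suc k))\<^sup>2" by simp
    ultimately show ?thesis
      unfolding up_def down_def by (simp add: field_simps power2_eq_square)
  qed
  then have "(\<Sum>k\<in>{1..<M}. y k * y (Suc k)) \<le> (\<Sum>k\<in>{1..<M}. up k) + (\<Sum>k\<in>{1..<M}. down (Suc k))"
    unfolding sum.distrib[symmetric] by (rule sum_mono)
  also have "(\<Sum>k\<in>{1..<M}. up k) = (\<Sum>k\<in>{1..M}. up k)"
    using \<open>w (Suc M) = 0\<close> by (cases M) (simp_all add: up_def atLeastLessThanSuc_atLeastAtMost[symmetric])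
  also have "(\<Sum>k\<in>{1..<M}. down (Suc k)) = (\<Sum>k\<in>{1..M}. down k)"
  proof -
    have "(\<Sum>k\<in>{1..<M}. down (Suc k)) = (\<Sum>k\<in>{Suc 1..<Suc M}. down k)"
      by (rule sum.shift_bounds_Suc_ivl[symmetric])
    also have "\<dots> = (\<Sum>k\<in>{1..<Suc M}. down k)"
      using \<open>w 0 = 0\<close> by (cases M) (simp_all add: down_def sum.atLeast_Suc_lessThan)
    finally show ?thesis by (simp add: atLeastLessThanSuc_atLeastAtMost)
  qed
  also have "(\<Sum>k\<in>{1..M}. up k) + (\<Sum>k\<in>{1..M}. down k) = (\<Sum>k\<in>{1..M}. \<mu> * (y k)\<^sup>2)"
    unfolding sum.distrib[symmetric]
  proof (rule sum.cong)
    fix k assume k: "k \<in> {1..M}"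
    have "up k + down k = (w (k - 1) + w (Suc k)) / w k * (y k)\<^sup>2 / 2"
      unfolding up_def down_def by (simp add: add_divide_distrib distrib_right)
    then show "up k + down k = \<mu> * (y k)\<^sup>2" using eigen[OF k] w_pos[OF k] by simp
  qed simp
  finally show ?thesis by (simp add: sum_distrib_left)
qed

lemma adjacent_products_le_cos:
  fixes y :: "nat \<Rightarrow> real"
  shows "(\<Sum>k\<in>{1..<M}. y k * y (Suc k)) \<le> cos (pi / (real M + 1)) * (\<Sum>k\<in>{1..M}. (y k)\<^sup>2)"
proof -
  define \<theta> where "\<theta> = pi / (real M + 1)"
  have "0 < \<theta>" by (simp add: \<theta>_def)
  have pos: "0 < sin (real k * \<theta>)" if "k \<in> {1..M}" for k
  proof (rule sin_gt_zero)
    have "real k * \<theta> < (real M + 1) * \<theta>" using that \<open>0 < \<theta>\<close> by (intro mult_strict_right_mono) auto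
    then show "real k * \<theta> < pi" by (simp add: \<theta>_def)
  qed (use that \<open>0 < \<theta>\<close> in simp)
  have "real (Suc M) * \<theta> = pi" by (simp add: \<theta>_def add.commute)
  then have "sin (real (Suc M) * \<theta>) = 0" by simp
  moreover have "sin (real (k - 1) * \<theta>) + sin (real (Suc k) * \<theta>) = 2 * cos \<theta> * sin (real k * \<theta>)"
    if "k \<in> {1..M}" for k
  proof -
    have "real (k - 1) * \<theta> = real k * \<theta> - \<theta>" "real (Suc k) * \<theta> = real k * \<theta> + \<theta>"
      using that by (simp_all add: of_nat_diff algebra_simps)
    then show ?thesis by (simp add: sin_diff sin_add)
  qed
  ultimately show ?thesis
    using adjacent_products_le_eigenvalue[of M "\<lambda>k. sin (real k * \<theta>)", OF pos] by (simp add: \<theta>_def)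
qed

lemma geometric_block_ineq:
  fixes \<rho> A d :: real
  assumes "1 \<le> M" and "0 < d" and "\<rho> \<le> A + d"
  shows "\<rho> * (\<Sum>k\<in>{1..M}. (1 / d ^ k)\<^sup>2)
    \<le> (A + cos (pi / (real M + 1))) * (\<Sum>k\<in>{1..M}. (1 / d ^ k)\<^sup>2) + 1 / d"
proof -
  define t where "t k = 1 / d ^ k" for k
  have shift: "d * (t (Suc k))\<^sup>2 = t k * t (Suc k)" for k
    using \<open>0 < d\<close> by (simp add: t_def power2_eq_square field_simps)
  have "\<rho> * (\<Sum>k\<in>{1..M}. (t k)\<^sup>2) \<le> (\<Sum>k\<in>{1..M}. (A + d) * (t k)\<^sup>2)"
    unfolding sum_distrib_left using \<open>\<rho> \<le> A + d\<close> by (intro sum_mono mult_right_mono) auto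
  also have "\<dots> = A * (\<Sum>k\<in>{1..M}. (t k)\<^sup>2) + (\<Sum>k<M. t k * t (Suc k))"
    using sum_bounds_lt_plus1[of "\<lambda>k. d * (t k)\<^sup>2" M]
    by (simp add: distrib_right sum.distrib sum_distrib_left shift)
  also have "(\<Sum>k<M. t k * t (Suc k)) = t 1 + (\<Sum>k\<in>{1..<M}. t k * t (Suc k))"
    using \<open>1 \<le> M\<close> by (simp add: lessThan_atLeast0 sum.atLeast_Suc_lessThan t_def)
  also have "(\<Sum>k\<in>{1..<M}. t k * t (Suc k)) \<le> cos (pi / (real M + 1)) * (\<Sum>k\<in>{1..M}. (t k)\<^sup>2)"
    by (rule adjacent_products_le_cos)
  finally show ?thesis by (simp add: t_def algebra_simps)
qed

lemma B0mat_quadratic_form: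
  "(\<Sum>r<Suc m. \<Sum>s<Suc m. u r * B0mat (Suc m) c r s * u s)
     = (\<Sum>r<m. u r * u (Suc r)) + u m * (\<Sum>s<Suc m. c s * u s)"
proof -
  have "(\<Sum>s<Suc m. u r * B0mat (Suc m) c r s * u s) = u r * u (Suc r)" if "r < m" for r
  proof -
    have "(\<Sum>s<Suc m. u r * B0mat (Suc m) c r s * u s) = (\<Sum>s<Suc m. if s = Suc r then u r * u s else 0)"
      using that by (intro sum.cong) (auto simp: B0mat_def)
    then show ?thesis using that by (simp add: sum.delta')
  qed
  moreover have "(\<Sum>s<Suc m. u m * B0mat (Suc m) c m s * u s) = u m * (\<Sum>s<Suc m. c s * u s)"
    unfolding sum_distrib_left by (intro sum.cong) (simp_all add: B0mat_def mult_ac)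
  ultimately show ?thesis by simp
qed

lemma quadratic_form_le_num_radius:
  assumes unit: "(\<Sum>i<m. (cmod (x i))\<^sup>2) = 1"
  shows "cmod (\<Sum>r<m. \<Sum>s<m. cnj (x r) * A r s * x s) \<le> num_radius m A"
  unfolding num_radius_def
proof (rule cSUP_upper)
  show "x \<in> {x. (\<Sum>i<m. (cmod (x i))\<^sup>2) = 1}" using unit by simp
  have "cmod (\<Sum>r<m. \<Sum>s<m. cnj (z r) * A r s * z s) \<le> (\<Sum>r<m. \<Sum>s<m. cmod (A r s))"
    if "(\<Sum>i<m. (cmod (z i))\<^sup>2) = 1" for z
  proof -
    have le1: "cmod (z i) \<le> 1" if "i < m" for i
    proof -
      have "(cmod (z i))\<^sup>2 \<le> 1"
        using member_le_sum[of i "{..<m}" "\<lambda>i. (cmod (z i))\<^sup>2"] that \<open>(\<Sum>i<m. (cmod (z i))\<^sup>2) = 1\<close> by simp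
      then show ?thesis by (simp add: power_le_one_iff abs_square_le_1)
    qed
    have "cmod (\<Sum>r<m. \<Sum>s<m. cnj (z r) * A r s * z s) \<le> (\<Sum>r<m. \<Sum>s<m. cmod (cnj (z r) * A r s * z s))"
      by (rule order_trans[OF norm_sum sum_mono]) (rule norm_sum)
    also have "\<dots> \<le> (\<Sum>r<m. \<Sum>s<m. cmod (A r s))"
    proof (intro sum_mono)
      fix r s assume "r \<in> {..<m}" "s \<in> {..<m}"
      then have "cmod (z r) * cmod (z s) \<le> 1" using le1 by (simp add: mult_le_one)
      from mult_right_mono[OF this norm_ge_zero[of "A r s"]]
      show "cmod (cnj (z r) * A r s * z s) \<le> cmod (A r s)" by (simp add: norm_mult mult_ac)
    qed
    finally show ?thesis .
  qed
  then show "bdd_above ((\<lambda>x. cmod (\<Sum>r<m. \<Sum>s<m. cnj (x r) * A r s * x s)) ` {x. (\<Sum>i<m. (cmod (x i))\<^sup>2) = 1})"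
    by (intro bdd_aboveI2) simp
qed

lemma real_quadratic_form_le_num_radius:
  fixes M :: "nat \<Rightarrow> nat \<Rightarrow> real" and u :: "nat \<Rightarrow> real"
  shows "(\<Sum>r<m. \<Sum>s<m. u r * M r s * u s)
    \<le> num_radius m (\<lambda>r s. complex_of_real (M r s)) * (\<Sum>i<m. (u i)\<^sup>2)"
proof (cases "(\<Sum>i<m. (u i)\<^sup>2) = 0")
  case True
  then have "u i = 0" if "i < m" for i using that by (simp add: sum_nonneg_eq_0_iff)
  then show ?thesis using True by simp
next
  case False
  define q where "q = (\<Sum>i<m. (u i)\<^sup>2)"
  have "0 < q" using False unfolding q_def by (simp add: less_le sum_nonneg)
  define x where "x i = complex_of_real (u i / sqrt q)" for i
  have "(cmod (x i))\<^sup>2 = (u i)\<^sup>2 / q" for i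
    unfolding x_def norm_of_real using \<open>0 < q\<close> by (simp add: power_divide)
  then have "(\<Sum>i<m. (cmod (x i))\<^sup>2) = 1"
    using \<open>0 < q\<close> by (simp add: q_def flip: sum_divide_distrib)
  then have radius: "cmod (\<Sum>r<m. \<Sum>s<m. cnj (x r) * complex_of_real (M r s) * x s)
      \<le> num_radius m (\<lambda>r s. complex_of_real (M r s))"
    by (rule quadratic_form_le_num_radius)
  have form: "(\<Sum>r<m. \<Sum>s<m. cnj (x r) * complex_of_real (M r s) * x s)
      = complex_of_real ((\<Sum>r<m. \<Sum>s<m. u r * M r s * u s) / q)"
  proof -
    have "cnj (x r) * complex_of_real (M r s) * x s = complex_of_real (u r * M r s * u s / q)" for r s
    proof -
      have "u r / sqrt q * M r s * (u s / sqrt q) = u r * M r s * u s / (sqrt q * sqrt q)" by simp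
      then show ?thesis using \<open>0 < q\<close> by (simp add: x_def flip: of_real_mult)
    qed
    then show ?thesis by (simp add: sum_divide_distrib)
  qed
  from radius have "\<bar>(\<Sum>r<m. \<Sum>s<m. u r * M r s * u s) / q\<bar> \<le> num_radius m (\<lambda>r s. complex_of_real (M r s))"
    unfolding form norm_of_real .
  then have "(\<Sum>r<m. \<Sum>s<m. u r * M r s * u s) / q \<le> num_radius m (\<lambda>r s. complex_of_real (M r s))"
    by linarith
  then show ?thesis using \<open>0 < q\<close> by (simp add: q_def pos_divide_le_eq)
qed

lemma double_sum_Cauchy_Schwarz:
  fixes f g :: "'a \<Rightarrow> 'b \<Rightarrow> real"
  assumes "finite I" and "\<And>i. i \<in> I \<Longrightarrow> finite (K i)"
  shows "(\<Sum>i\<in>I. \<Sum>k\<in>K i. f i k * g i k)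
    \<le> sqrt (\<Sum>i\<in>I. \<Sum>k\<in>K i. (f i k)\<^sup>2) * sqrt (\<Sum>i\<in>I. \<Sum>k\<in>K i. (g i k)\<^sup>2)"
proof -
  let ?S = "Sigma I K"
  have "(\<Sum>i\<in>I. \<Sum>k\<in>K i. f i k * g i k) = (\<Sum>(i, k)\<in>?S. f i k * g i k)"
    using assms by (simp add: sum.Sigma)
  also have "\<dots> \<le> (\<Sum>p\<in>?S. \<bar>case_prod f p\<bar> * \<bar>case_prod g p\<bar>)"
    by (intro sum_mono) (auto simp: abs_mult[symmetric])
  also have "\<dots> \<le> L2_set (case_prod f) ?S * L2_set (case_prod g) ?S" by (rule L2_set_mult_ineq)
  also have "\<dots> = sqrt (\<Sum>i\<in>I. \<Sum>k\<in>K i. (f i k)\<^sup>2) * sqrt (\<Sum>i\<in>I. \<Sum>k\<in>K i. (g i k)\<^sup>2)"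
    using assms by (simp add: L2_set_def sum.Sigma split_def)
  finally show ?thesis .
qed

lemma le_max_eigenvalue_2x2:
  fixes \<alpha> \<beta> c \<rho> x y :: real
  assumes quad: "\<rho> * (x\<^sup>2 + y\<^sup>2) \<le> \<beta> * x\<^sup>2 + \<alpha> * y\<^sup>2 + c * x * y" and "x \<noteq> 0 \<or> y \<noteq> 0"
  shows "\<rho> \<le> (\<alpha> + \<beta> + sqrt ((\<alpha> - \<beta>)\<^sup>2 + c\<^sup>2)) / 2"
proof -
  define S where "S = sqrt ((\<alpha> - \<beta>)\<^sup>2 + c\<^sup>2)"
  define L where "L = (\<alpha> + \<beta> + S) / 2"
  have gap: "\<bar>\<alpha> - \<beta>\<bar> \<le> S" unfolding S_def by (rule real_le_rsqrt) simp
  have "0 \<le> L - \<beta>" using abs_le_D2[OF gap] unfolding L_def by (simp add: field_simps)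
  have "0 \<le> L - \<alpha>" using abs_le_D1[OF gap] unfolding L_def by (simp add: field_simps)
  \<comment> \<open>L is the larger root of the characteristic polynomial of [[beta, c/2], [c/2, alpha]]\<close>
  have "(L - \<beta>) * (L - \<alpha>) = (S\<^sup>2 - (\<alpha> - \<beta>)\<^sup>2) / 4"
    unfolding L_def by (simp add: field_simps power2_eq_square)
  also have "\<dots> = (c / 2)\<^sup>2" by (simp add: S_def power_divide)
  finally have "sqrt (L - \<beta>) * sqrt (L - \<alpha>) = \<bar>c\<bar> / 2"
    by (simp flip: real_sqrt_mult)
  moreover have "0 \<le> (sqrt (L - \<beta>) * \<bar>x\<bar> - sqrt (L - \<alpha>) * \<bar>y\<bar>)\<^sup>2" by simp
  ultimately have "\<bar>c\<bar> * \<bar>x\<bar> * \<bar>y\<bar> \<le> (L - \<beta>) * x\<^sup>2 + (L - \<alpha>) * y\<^sup>2"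
    using \<open>0 \<le> L - \<beta>\<close> \<open>0 \<le> L - \<alpha>\<close> by (simp add: power2_eq_square algebra_simps)
  moreover have "c * x * y \<le> \<bar>c\<bar> * \<bar>x\<bar> * \<bar>y\<bar>" by (simp add: abs_mult[symmetric])
  ultimately have "\<rho> * (x\<^sup>2 + y\<^sup>2) \<le> L * (x\<^sup>2 + y\<^sup>2)" using quad by (simp add: algebra_simps)
  moreover have "0 < x\<^sup>2 + y\<^sup>2" using \<open>x \<noteq> 0 \<or> y \<noteq> 0\<close> by (auto simp: add_pos_nonneg add_nonneg_pos)
  ultimately show ?thesis unfolding L_def S_def by simp
qed

section \<open>Bounds from the scalar eigenvalue inequality\<close>

(* In the application rho = |l|, c i = ||C_i||, b j k = ||B_k^(j)||, A j = |a_j| and d j = |l - a_j|. *)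
locale rational_eigen_ineq =
  fixes m n :: nat and mj :: "nat \<Rightarrow> nat"
    and \<rho> :: real and c :: "nat \<Rightarrow> real" and b :: "nat \<Rightarrow> nat \<Rightarrow> real" and A d :: "nat \<Rightarrow> real"
  assumes power_ineq: "\<rho> ^ m \<le> (\<Sum>i<m. c i * \<rho> ^ i) + (\<Sum>j\<in>{1..n}. \<Sum>k\<in>{1..mj j}. b j k / d j ^ k)"
    and m_pos: "1 \<le> m" and n_pos: "1 \<le> n" and mj_pos: "\<And>j. j \<in> {1..n} \<Longrightarrow> 1 \<le> mj j"
    and rho_nonneg: "0 \<le> \<rho>" and c_nonneg: "\<And>i. 0 \<le> c i" and b_nonneg: "\<And>j k. 0 \<le> b j k"
    and A_nonneg: "\<And>j. 0 \<le> A j" and d_pos: "\<And>j. j \<in> {1..n} \<Longrightarrow> 0 < d j"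
    and rho_le: "\<And>j. \<rho> \<le> A j + d j"
begin

lemma sum_norms_bound:
  "\<rho> \<le> max (Max ((\<lambda>j. 1 + A j) ` {1..n})) ((\<Sum>j\<in>{1..n}. \<Sum>k\<in>{1..mj j}. b j k) + (\<Sum>i<m. c i))"
proof (rule ccontr)
  assume contra: "\<not> ?thesis"
  have far: "1 + A j < \<rho>" if "j \<in> {1..n}" for j
  proof -
    have "1 + A j \<le> Max ((\<lambda>j. 1 + A j) ` {1..n})" using that by (intro Max_ge) auto
    then show ?thesis using contra by simp
  qed
  have big: "(\<Sum>j\<in>{1..n}. \<Sum>k\<in>{1..mj j}. b j k) + (\<Sum>i<m. c i) < \<rho>"
    using contra by simp
  have "1 < \<rho>" using far[of 1] n_pos A_nonneg[of 1] by simp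
  define q where "q = \<rho> ^ (m - 1)"
  have "1 \<le> q" unfolding q_def using \<open>1 < \<rho>\<close> by simp
  have "(\<Sum>i<m. c i * \<rho> ^ i) \<le> (\<Sum>i<m. c i * q)"
    unfolding q_def using \<open>1 < \<rho>\<close> c_nonneg by (intro sum_mono mult_left_mono power_increasing) auto
  moreover have "b j k / d j ^ k \<le> b j k * q" if "j \<in> {1..n}" for j k
  proof -
    have "1 \<le> d j ^ k" using far[OF that] rho_le[of j] by simp
    then have "b j k / d j ^ k \<le> b j k" using b_nonneg[of j k] by (simp add: divide_le_eq mult_le_cancel_left1)
    also have "\<dots> \<le> b j k * q" using b_nonneg[of j k] \<open>1 \<le> q\<close> by (simp add: mult_le_cancel_left1)
    finally show ?thesis .
  qed
  then have "(\<Sum>j\<in>{1..n}. \<Sum>k\<in>{1..mj j}. b j k / d j ^ k) \<le> (\<Sum>j\<in>{1..n}. \<Sum>k\<in>{1..mj j}. b j k * q)"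
    by (intro sum_mono) auto
  ultimately have "\<rho> ^ m \<le> ((\<Sum>j\<in>{1..n}. \<Sum>k\<in>{1..mj j}. b j k) + (\<Sum>i<m. c i)) * q"
    using power_ineq by (simp add: sum_distrib_right distrib_right)
  also have "\<dots> < \<rho> * q" using big \<open>1 \<le> q\<close> by simp
  also have "\<rho> * q = \<rho> ^ m" unfolding q_def using m_pos by (simp add: power_eq_if)
  finally show False by simp
qed

lemma bound_by_pole_count:
  assumes "\<And>i. i \<in> {1..<m} \<Longrightarrow> 1 + c i < \<rho>"
    and "\<And>j k. j \<in> {1..n} \<Longrightarrow> k \<in> {1..mj j} \<Longrightarrow> b j k / d j ^ k \<le> 1"
  shows "\<rho> \<le> c 0 + real (\<Sum>j\<in>{1..n}. mj j)"
proof -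
  have "(\<Sum>j\<in>{1..n}. \<Sum>k\<in>{1..mj j}. b j k / d j ^ k) \<le> (\<Sum>j\<in>{1..n}. \<Sum>k\<in>{1..mj j}. 1)"
    using assms(2) by (intro sum_mono) auto
  moreover have "\<rho> \<le> c 0 + (\<Sum>j\<in>{1..n}. \<Sum>k\<in>{1..mj j}. b j k / d j ^ k)"
    using assms(1) by (intro le_const_coeff_if_power_le[OF power_ineq m_pos rho_nonneg]) fastforce
  ultimately show ?thesis by simp
qed

lemma simple_poles_bound:
  assumes simple: "\<forall>j\<in>{1..n}. mj j = 1"
  shows "\<rho> \<le> Max ((\<lambda>j. A j + b j 1) ` {1..n} \<union> (\<lambda>i. 1 + c i) ` {1..m-1} \<union> {c 0 + real n})"
proof (rule ccontr)
  assume "\<not> ?thesis"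
  then have below: "\<forall>x \<in> (\<lambda>j. A j + b j 1) ` {1..n} \<union> (\<lambda>i. 1 + c i) ` {1..m-1} \<union> {c 0 + real n}. x < \<rho>"
    by (simp add: not_le)
  have "\<rho> \<le> c 0 + real (\<Sum>j\<in>{1..n}. mj j)"
  proof (rule bound_by_pole_count)
    show "1 + c i < \<rho>" if "i \<in> {1..<m}" for i using below that by auto
    show "b j k / d j ^ k \<le> 1" if "j \<in> {1..n}" "k \<in> {1..mj j}" for j k
    proof -
      have "k = 1" using simple that by auto
      moreover have "A j + b j 1 < \<rho>" using below that(1) by blast
      then have "b j 1 \<le> d j" using rho_le[of j] by simp
      ultimately show ?thesis using d_pos[OF that(1)] by simp
    qed
  qed
  then show False using below simple by simp
qed

lemma multiple_poles_bound:
  "\<rho> \<le> Max ((\<Union>j\<in>{1..n}. (\<lambda>k. A j + b j k) ` {1..mj j}) \<union> (\<lambda>j. 1 + A j) ` {1..n}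
      \<union> (\<lambda>i. 1 + c i) ` {1..m-1} \<union> {c 0 + real (\<Sum>j\<in>{1..n}. mj j)})"
proof (rule ccontr)
  assume "\<not> ?thesis"
  then have below: "\<forall>x \<in> (\<Union>j\<in>{1..n}. (\<lambda>k. A j + b j k) ` {1..mj j}) \<union> (\<lambda>j. 1 + A j) ` {1..n}
      \<union> (\<lambda>i. 1 + c i) ` {1..m-1} \<union> {c 0 + real (\<Sum>j\<in>{1..n}. mj j)}. x < \<rho>"
    by (simp add: not_le)
  have "\<rho> \<le> c 0 + real (\<Sum>j\<in>{1..n}. mj j)"
  proof (rule bound_by_pole_count)
    show "1 + c i < \<rho>" if "i \<in> {1..<m}" for i using below that by auto
    show "b j k / d j ^ k \<le> 1" if "j \<in> {1..n}" "k \<in> {1..mj j}" for j k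
    proof -
      have "A j + b j k < \<rho>" "1 + A j < \<rho>" using below that by blast+
      then have "b j k \<le> d j" "1 \<le> d j" using rho_le[of j] by simp_all
      moreover from \<open>1 \<le> d j\<close> have "d j \<le> d j ^ k"
        using that(2) by (metis atLeastAtMost_iff power_increasing power_one_right)
      ultimately show ?thesis using d_pos[OF that(1)] by simp
    qed
  qed
  then show False using below by simp
qed

definition powers_sq :: real where
  "powers_sq = (\<Sum>i<m. (\<rho> ^ i)\<^sup>2)"

definition poles_sq :: real where
  "poles_sq = (\<Sum>j\<in>{1..n}. \<Sum>k\<in>{1..mj j}. (1 / d j ^ k)\<^sup>2)"

lemma powers_sq_ge: "i < m \<Longrightarrow> (\<rho> ^ i)\<^sup>2 \<le> powers_sq"
  unfolding powers_sq_def by (rule member_le_sum) auto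

lemma poles_sq_nonneg: "0 \<le> poles_sq"
  unfolding poles_sq_def by (intro sum_nonneg) simp

lemma companion_block_ineq:
  "\<rho> * powers_sq \<le> num_radius m (\<lambda>r s. complex_of_real (B0mat m c r s)) * powers_sq
     + sqrt (\<Sum>j\<in>{1..n}. \<Sum>k\<in>{1..mj j}. (b j k)\<^sup>2) * (sqrt powers_sq * sqrt poles_sq)"
proof -
  obtain m' where m: "m = Suc m'" using m_pos by (cases m) auto
  define X where "X = (\<Sum>j\<in>{1..n}. \<Sum>k\<in>{1..mj j}. b j k * (1 / d j ^ k))"
  have "X \<le> sqrt (\<Sum>j\<in>{1..n}. \<Sum>k\<in>{1..mj j}. (b j k)\<^sup>2) * sqrt poles_sq"
    unfolding X_def poles_sq_def by (rule double_sum_Cauchy_Schwarz) auto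
  moreover have "\<rho> ^ m' \<le> sqrt powers_sq" using powers_sq_ge[of m'] m by (intro real_le_rsqrt) auto
  moreover have "0 \<le> X"
    unfolding X_def using b_nonneg d_pos by (intro sum_nonneg mult_nonneg_nonneg) (auto simp: less_imp_le)
  ultimately have "\<rho> ^ m' * X \<le> sqrt (\<Sum>j\<in>{1..n}. \<Sum>k\<in>{1..mj j}. (b j k)\<^sup>2) * (sqrt powers_sq * sqrt poles_sq)"
    by (smt (verit) mult.left_commute mult_mono real_sqrt_ge_zero zero_le_power rho_nonneg)
  moreover have "\<rho> * powers_sq \<le> num_radius m (\<lambda>r s. complex_of_real (B0mat m c r s)) * powers_sq + \<rho> ^ m' * X"
  proof -
    have "\<rho> * powers_sq = (\<Sum>r<m'. \<rho> ^ r * \<rho> ^ Suc r) + \<rho> ^ m' * \<rho> ^ m"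
      unfolding powers_sq_def unfolding m by (simp add: sum_distrib_left distrib_left power2_eq_square mult_ac)
    also have "\<dots> \<le> (\<Sum>r<m'. \<rho> ^ r * \<rho> ^ Suc r) + \<rho> ^ m' * ((\<Sum>s<m. c s * \<rho> ^ s) + X)"
      using power_ineq rho_nonneg unfolding X_def by (simp add: mult_left_mono)
    also have "\<dots> = (\<Sum>r<m. \<Sum>s<m. \<rho> ^ r * B0mat m c r s * \<rho> ^ s) + \<rho> ^ m' * X"
      unfolding m B0mat_quadratic_form by (simp add: algebra_simps)
    also have "\<dots> \<le> num_radius m (\<lambda>r s. complex_of_real (B0mat m c r s)) * powers_sq + \<rho> ^ m' * X"
      unfolding powers_sq_def using real_quadratic_form_le_num_radius by simp
    finally show ?thesis .
  qed
  ultimately show ?thesis by simp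
qed

lemma pole_block_ineq:
  "\<rho> * poles_sq \<le> Max ((\<lambda>j. A j + cos (pi / (real (mj j) + 1))) ` {1..n}) * poles_sq
     + sqrt (real (\<Sum>j\<in>{1..n}. mj j)) * (sqrt powers_sq * sqrt poles_sq)"
proof -
  define \<alpha> where "\<alpha> = Max ((\<lambda>j. A j + cos (pi / (real (mj j) + 1))) ` {1..n})"
  define T where "T j = (\<Sum>k\<in>{1..mj j}. (1 / d j ^ k)\<^sup>2)" for j
  have "\<rho> * T j \<le> \<alpha> * T j + 1 / d j" if j: "j \<in> {1..n}" for j
  proof -
    have "A j + cos (pi / (real (mj j) + 1)) \<le> \<alpha>" unfolding \<alpha>_def using j by (intro Max_ge) auto
    moreover have "0 \<le> T j" unfolding T_def by (intro sum_nonneg) simp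
    moreover have "\<rho> * T j \<le> (A j + cos (pi / (real (mj j) + 1))) * T j + 1 / d j"
      unfolding T_def using mj_pos[OF j] d_pos[OF j] rho_le[of j] by (rule geometric_block_ineq)
    ultimately show ?thesis by (meson add_le_cancel_right mult_right_mono order_trans)
  qed
  then have "\<rho> * poles_sq \<le> \<alpha> * poles_sq + (\<Sum>j\<in>{1..n}. 1 / d j)"
    unfolding poles_sq_def T_def[symmetric] sum_distrib_left sum.distrib[symmetric] by (rule sum_mono)
  moreover have "(\<Sum>j\<in>{1..n}. 1 / d j) \<le> sqrt (real (\<Sum>j\<in>{1..n}. mj j)) * sqrt poles_sq"
  proof -
    have cs: "(\<Sum>j\<in>{1..n}. 1 / d j) \<le> sqrt (real n) * sqrt (\<Sum>j\<in>{1..n}. (1 / d j)\<^sup>2)"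
      using double_sum_Cauchy_Schwarz[of "{1..n}" "\<lambda>_. {1}" "\<lambda>_ _. 1" "\<lambda>j k. 1 / d j ^ k"] by simp
    have "(\<Sum>j\<in>{1..n}. (1 / d j)\<^sup>2) \<le> poles_sq"
      unfolding poles_sq_def
    proof (rule sum_mono)
      fix j assume "j \<in> {1..n}"
      then have "1 \<in> {1..mj j}" using mj_pos by simp
      from member_le_sum[OF this, of "\<lambda>k. (1 / d j ^ k)\<^sup>2"]
      show "(1 / d j)\<^sup>2 \<le> (\<Sum>k\<in>{1..mj j}. (1 / d j ^ k)\<^sup>2)" by simp
    qed
    moreover have "n \<le> (\<Sum>j\<in>{1..n}. mj j)"
      using sum_mono[of "{1..n}" "\<lambda>_. 1::nat" mj] mj_pos by simp
    moreover have "0 \<le> (\<Sum>j\<in>{1..n}. (1 / d j)\<^sup>2)" by (simp add: sum_nonneg)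
    ultimately have "sqrt (real n) * sqrt (\<Sum>j\<in>{1..n}. (1 / d j)\<^sup>2)
        \<le> sqrt (real (\<Sum>j\<in>{1..n}. mj j)) * sqrt poles_sq"
      by (intro mult_mono real_sqrt_le_mono) (simp_all only: of_nat_le_iff of_nat_0_le_iff real_sqrt_ge_zero)
    with cs show ?thesis by linarith
  qed
  moreover have "sqrt (real (\<Sum>j\<in>{1..n}. mj j)) * sqrt poles_sq
      \<le> sqrt (real (\<Sum>j\<in>{1..n}. mj j)) * (sqrt powers_sq * sqrt poles_sq)"
  proof (rule mult_left_mono)
    have "1 \<le> sqrt powers_sq" using powers_sq_ge[of 0] m_pos by simp
    then show "sqrt poles_sq \<le> sqrt powers_sq * sqrt poles_sq"
      using poles_sq_nonneg by (simp add: mult_le_cancel_right1)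
  qed (simp add: sum_nonneg)
  ultimately show ?thesis unfolding \<alpha>_def by linarith
qed

lemma numerical_radius_bound:
  "let \<alpha> = Max ((\<lambda>j. A j + cos (pi / (real (mj j) + 1))) ` {1..n});
       \<beta> = num_radius m (\<lambda>r s. complex_of_real (B0mat m c r s));
       \<gamma> = sqrt (real (\<Sum>j\<in>{1..n}. mj j));
       \<delta> = sqrt (\<Sum>j\<in>{1..n}. \<Sum>k\<in>{1..mj j}. (b j k)\<^sup>2)
   in \<rho> \<le> (\<alpha> + \<beta> + sqrt ((\<alpha> - \<beta>)\<^sup>2 + (\<gamma> + \<delta>)\<^sup>2)) / 2"
  unfolding Let_def
proof (rule le_max_eigenvalue_2x2)
  have "1 \<le> powers_sq" using powers_sq_ge[of 0] m_pos by simp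
  then show "sqrt powers_sq \<noteq> 0 \<or> sqrt poles_sq \<noteq> 0" by simp
  show "\<rho> * ((sqrt powers_sq)\<^sup>2 + (sqrt poles_sq)\<^sup>2)
    \<le> num_radius m (\<lambda>r s. complex_of_real (B0mat m c r s)) * (sqrt powers_sq)\<^sup>2
      + Max ((\<lambda>j. A j + cos (pi / (real (mj j) + 1))) ` {1..n}) * (sqrt poles_sq)\<^sup>2
      + (sqrt (real (\<Sum>j\<in>{1..n}. mj j)) + sqrt (\<Sum>j\<in>{1..n}. \<Sum>k\<in>{1..mj j}. (b j k)\<^sup>2))
        * sqrt powers_sq * sqrt poles_sq"
    using companion_block_ineq pole_block_ineq \<open>1 \<le> powers_sq\<close> poles_sq_nonneg
    by (simp add: algebra_simps)
qed

end

theorem theorem3p9: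
  fixes m n :: nat
    and C :: "nat \<Rightarrow> complex^'p^'p"
    and a :: "nat \<Rightarrow> complex"
    and mj :: "nat \<Rightarrow> nat"
    and B :: "nat \<Rightarrow> nat \<Rightarrow> complex^'p^'p"
    and N :: "complex^'p \<Rightarrow> real"
    and l0 :: complex
  assumes "m \<ge> 1" and "n \<ge> 1"
    and "inj_on a {1..n}"
    and "\<forall>j\<in>{1..n}. mj j \<ge> 1"
    and "is_vec_norm N"
    and "is_eigenvalue_R m C n a mj B l0"
  shows
    "(cmod l0 \<le> max (Max ((\<lambda>j. 1 + cmod (a j)) ` {1..n}))
        ((\<Sum>j\<in>{1..n}. \<Sum>k\<in>{1..mj j}. induced_norm N (B j k))
          + (\<Sum>i<m. induced_norm N (C i))))
  \<and>
    (if (\<forall>j\<in>{1..n}. mj j = 1) then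
        cmod l0 \<le> Max ((\<lambda>j. cmod (a j) + induced_norm N (B j 1)) ` {1..n}
                      \<union> (\<lambda>i. 1 + induced_norm N (C i)) ` {1..m-1}
                      \<union> {induced_norm N (C 0) + real n})
      else
        cmod l0 \<le> Max ((\<Union>j\<in>{1..n}. (\<lambda>k. cmod (a j) + induced_norm N (B j k)) ` {1..mj j})
                      \<union> (\<lambda>j. 1 + cmod (a j)) ` {1..n}
                      \<union> (\<lambda>i. 1 + induced_norm N (C i)) ` {1..m-1}
                      \<union> {induced_norm N (C 0) + real (\<Sum>j\<in>{1..n}. mj j)}))
  \<and>
    (let \<alpha> = Max ((\<lambda>j. cmod (a j) + cos (pi / (real (mj j) + 1))) ` {1..n});
          \<beta> = num_radius m (\<lambda>r s. complex_of_real
                  (B0mat m (\<lambda>i. induced_norm N (C i)) r s));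
          \<gamma> = sqrt (real (\<Sum>j\<in>{1..n}. mj j));
          \<delta> = sqrt (\<Sum>j\<in>{1..n}. \<Sum>k\<in>{1..mj j}. (induced_norm N (B j k))\<^sup>2)
      in cmod l0 \<le> (\<alpha> + \<beta> + sqrt ((\<alpha> - \<beta>)\<^sup>2 + (\<gamma> + \<delta>)\<^sup>2)) / 2)"
proof -
  interpret rational_eigen_ineq m n mj "cmod l0" "\<lambda>i. induced_norm N (C i)"
    "\<lambda>j k. induced_norm N (B j k)" "\<lambda>j. cmod (a j)" "\<lambda>j. cmod (l0 - a j)"
  proof
    show "cmod l0 ^ m \<le> (\<Sum>i<m. induced_norm N (C i) * cmod l0 ^ i)
        + (\<Sum>j\<in>{1..n}. \<Sum>k\<in>{1..mj j}. induced_norm N (B j k) / cmod (l0 - a j) ^ k)"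
      by (rule eigenvalue_R_modulus_ineq[OF assms(5,6)])
    show "0 < cmod (l0 - a j)" if "j \<in> {1..n}" for j
      using assms(6) that unfolding is_eigenvalue_R_def by auto
    show "cmod l0 \<le> cmod (a j) + cmod (l0 - a j)" for j
      using norm_triangle_ineq[of "a j" "l0 - a j"] by simp
  qed (use assms induced_norm_nonneg in auto)
  show ?thesis
    using sum_norms_bound simple_poles_bound multiple_poles_bound numerical_radius_bound by simp
qed

end
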